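(* Let $p>1$ be an integer and let $u^{(p)}$ be the fixed point of the substitution $\varphi_p(L)=L^pS$, $\varphi_p(S)=M$, $\varphi_p(M)=L^{p-1}S$. Let $v,w$ be factors of $u^{(p)}$ with $|v|=|w|$. Then $\left||v|_L-|w|_L\right|\le 3$.
   Context: $u^{(p)}=\lim_{n\to\infty}\varphi_p^n(L)$ is the unique infinite word over $\{L,S,M\}$ fixed by $\varphi_p$. A factor is a finite contiguous subword; $|w|$ is the length and $|w|_a$ the number of occurrences of the letter $a$ in $w$. *)

theory Defs
  imports Main
begin

datatype letter = L | S | M

fun phi_letter :: "nat \<Rightarrow> letter \<Rightarrow> letter list" where
  "phi_letter p L = replicate p L @ [S]"
| "phi_letter p S = [M]"
| "phi_letter p M = replicate (p - 1) L @ [S]"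

definition phi :: "nat \<Rightarrow> letter list \<Rightarrow> letter list" where
  "phi p w = concat (map (phi_letter p) w)"

text \<open>The fixed point u^(p) = lim phi_p^n(L): its n-th letter is read off any
  iterate phi_p^k(L) long enough to contain position n (the iterates are
  successive prefixes since phi_p(L) begins with L).\<close>
definition u :: "nat \<Rightarrow> nat \<Rightarrow> letter" where
  "u p n = ((phi p ^^ (LEAST k. n < length ((phi p ^^ k) [L]))) [L]) ! n"

definition factor :: "nat \<Rightarrow> nat \<Rightarrow> nat \<Rightarrow> letter list" where
  "factor p i n = map (u p) [i..<i+n]"

definition occ :: "letter \<Rightarrow> letter list \<Rightarrow> nat" where
  "occ a w = length (filter (\<lambda>x. x = a) w)"

end

theory Submission
  imports Defs
begin

text \<open>Two factors \<open>v = u[b, a)\<close> and \<open>w = u[e, c)\<close> are followed under desubstitution.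
  Every position of \<open>u\<close> has the form \<open>block_pos p k + q\<close> with \<open>q\<close> an offset inside the block
  \<open>\<phi>\<^sub>p(u\<^sub>k)\<close>, so the four endpoints lift to four ancestor positions, and the length difference
  \<open>D = |w| - |v|\<close> together with the differences \<open>s\<close>, \<open>m\<close> of the numbers of \<open>S\<close>'s and \<open>M\<close>'s
  transform by an explicit affine map. One exhibits an invariant of \<open>(D, s, m)\<close> and the four
  boundary letters that holds at the origin, is preserved by that map while \<open>|D| \<le> K\<close>, and
  cannot be reached from ancestors with \<open>|D| > K\<close>: shrinking such ancestors to \<open>|D| = K\<close> already
  yields descendants with \<open>|D| > K\<close>. By induction on the positions the invariant holds whenever
  \<open>|D| \<le> K\<close>; at \<open>D = 0\<close> it forces \<open>|s + m| \<le> 3\<close>, which is the claim since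
  \<open>|x|\<^sub>L = |x| - |x|\<^sub>S - |x|\<^sub>M\<close>. For \<open>p \<ge> 5\<close> the invariant has a closed form; for
  \<open>p = 2, 3, 4\<close> it is a finite table checked by evaluation.\<close>

section \<open>The substitution and its fixed point\<close>

fun Lrun :: "nat \<Rightarrow> letter \<Rightarrow> nat" where
  "Lrun p L = p" | "Lrun p S = 0" | "Lrun p M = p - 1"

fun last_letter :: "letter \<Rightarrow> letter" where
  "last_letter L = S" | "last_letter S = M" | "last_letter M = S"

definition block_letter :: "nat \<Rightarrow> letter \<Rightarrow> nat \<Rightarrow> letter" where
  "block_letter p a q = (if q < Lrun p a then L else last_letter a)"

lemma phi_letter_eq: "phi_letter p a = replicate (Lrun p a) L @ [last_letter a]"
  by (cases a) auto

lemma length_phi_letter: "length (phi_letter p a) = Suc (Lrun p a)"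
  by (simp add: phi_letter_eq)

lemma phi_Nil [simp]: "phi p [] = []"
  by (simp add: phi_def)

lemma phi_Cons [simp]: "phi p (a # xs) = phi_letter p a @ phi p xs"
  by (simp add: phi_def)

lemma phi_append [simp]: "phi p (xs @ ys) = phi p xs @ phi p ys"
  by (simp add: phi_def)

lemma occ_Nil [simp]: "occ a [] = 0"
  by (simp add: occ_def)

lemma occ_Cons [simp]: "occ a (x # xs) = (if x = a then 1 else 0) + occ a xs"
  by (simp add: occ_def)

lemma occ_append [simp]: "occ a (xs @ ys) = occ a xs + occ a ys"
  by (simp add: occ_def)

lemma occ_replicate_L: "occ a (replicate n L) = (if a = L then n else 0)"
  by (induction n) auto

lemma length_eq_occ: "length xs = occ L xs + occ S xs + occ M xs"
proof (induction xs)
  case (Cons x xs)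
  then show ?case by (cases x) auto
qed simp

lemma occ_phi_S: "occ S (phi p xs) = occ L xs + occ M xs"
proof (induction xs)
  case (Cons x xs)
  then show ?case by (cases x) (auto simp: phi_letter_eq occ_replicate_L)
qed simp

lemma occ_phi_M: "occ M (phi p xs) = occ S xs"
proof (induction xs)
  case (Cons x xs)
  then show ?case by (cases x) (auto simp: phi_letter_eq occ_replicate_L)
qed simp

lemma length_phi_ge: "length xs \<le> length (phi p xs)"
  by (induction xs) (auto simp: length_phi_letter)

definition phi_iter :: "nat \<Rightarrow> nat \<Rightarrow> letter list" where
  "phi_iter p k = (phi p ^^ k) [L]"

lemma phi_iter_prefix:
  assumes "p > 0" "k \<le> j"
  shows "\<exists>zs. phi_iter p j = phi_iter p k @ zs"
  using assms(2)
proof (induction j rule: dec_induct)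
  case (step j)
  have "\<exists>zs. phi_iter p (Suc i) = phi_iter p i @ zs" for i
  proof (induction i)
    case 0
    have "phi_letter p L = [L] @ replicate (p - 1) L @ [S]"
      using assms(1) by (cases p) auto
    then show ?case by (auto simp: phi_iter_def)
  next
    case (Suc i)
    then obtain zs where "phi_iter p (Suc i) = phi_iter p i @ zs" by blast
    then have "phi_iter p (Suc (Suc i)) = phi_iter p (Suc i) @ phi p zs"
      by (simp add: phi_iter_def)
    then show ?case by blast
  qed
  then show ?case using step.IH by (metis append.assoc)
qed simp

lemma length_phi_iter:
  assumes "p > 0"
  shows "k < length (phi_iter p k)"
proof (induction k)
  case 0
  then show ?case by (simp add: phi_iter_def)
next
  case (Suc k)
  obtain zs where zs: "phi_iter p k = L # zs"
    using phi_iter_prefix[OF assms, of 0 k] by (auto simp: phi_iter_def)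
  have "length (phi_iter p (Suc k)) = Suc p + length (phi p zs)"
    by (simp add: phi_iter_def zs[unfolded phi_iter_def] length_phi_letter)
  then show ?case using Suc zs assms length_phi_ge[of zs p] by simp
qed

lemma u_eq_phi_iter:
  assumes "p > 0" "n < length (phi_iter p k)"
  shows "u p n = phi_iter p k ! n"
proof -
  define k0 where "k0 = (LEAST k. n < length (phi_iter p k))"
  have k0: "n < length (phi_iter p k0)" "k0 \<le> k"
    using LeastI[of "\<lambda>k. n < length (phi_iter p k)", OF assms(2)]
      Least_le[of "\<lambda>k. n < length (phi_iter p k)", OF assms(2)]
    by (simp_all add: k0_def)
  obtain zs where "phi_iter p k = phi_iter p k0 @ zs"
    using phi_iter_prefix[OF assms(1) k0(2)] by blast
  then show ?thesis
    using k0(1) by (simp add: u_def k0_def phi_iter_def nth_append)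
qed

lemma map_u_upt_eq_take:
  assumes "p > 0" "m \<le> length (phi_iter p k)"
  shows "map (u p) [0..<m] = take m (phi_iter p k)"
  using assms by (intro nth_equalityI) (auto simp: u_eq_phi_iter)

lemma u_0: "p > 0 \<Longrightarrow> u p 0 = L"
  using u_eq_phi_iter[of p 0 0] by (simp add: phi_iter_def)

definition block_pos :: "nat \<Rightarrow> nat \<Rightarrow> nat" where
  "block_pos p k = length (phi p (map (u p) [0..<k]))"

lemma block_pos_Suc: "block_pos p (Suc k) = block_pos p k + Suc (Lrun p (u p k))"
  by (simp add: block_pos_def length_phi_letter)

lemma map_u_block_pos:
  assumes "p > 0"
  shows "map (u p) [0..<block_pos p k] = phi p (map (u p) [0..<k])"
proof -
  have "map (u p) [0..<k] = take k (phi_iter p k)"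
    using map_u_upt_eq_take[OF assms] length_phi_iter[OF assms, of k] by simp
  then have "phi_iter p k = map (u p) [0..<k] @ drop k (phi_iter p k)"
    by simp
  then have "phi_iter p (Suc k) = phi p (map (u p) [0..<k]) @ phi p (drop k (phi_iter p k))"
    by (metis phi_append phi_iter_def funpow.simps(2) comp_apply)
  then show ?thesis
    using map_u_upt_eq_take[OF assms, of "block_pos p k" "Suc k"] by (simp add: block_pos_def)
qed

lemma
  assumes "p > 0" "q \<le> Lrun p (u p k)"
  shows u_block: "u p (block_pos p k + q) = block_letter p (u p k) q"
    and map_u_block: "map (u p) [0..<block_pos p k + q] = phi p (map (u p) [0..<k]) @ replicate q L"
proof -
  have whole: "map (u p) [0..<block_pos p (Suc k)] = phi p (map (u p) [0..<k]) @ phi_letter p (u p k)"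
    using map_u_block_pos[OF assms(1), of "Suc k"] by simp
  have len: "length (phi p (map (u p) [0..<k])) = block_pos p k"
    by (simp add: block_pos_def)
  have "block_pos p k + q < block_pos p (Suc k)"
    using assms(2) by (simp add: block_pos_Suc)
  then have "u p (block_pos p k + q) = (phi p (map (u p) [0..<k]) @ phi_letter p (u p k)) ! (block_pos p k + q)"
    using arg_cong[OF whole, of "\<lambda>xs. xs ! (block_pos p k + q)"] by simp
  then show "u p (block_pos p k + q) = block_letter p (u p k) q"
    using assms(2) len by (auto simp: nth_append phi_letter_eq block_letter_def)
  have "map (u p) [0..<block_pos p k + q] = take (block_pos p k + q) (map (u p) [0..<block_pos p (Suc k)])"
    using assms(2) by (simp add: block_pos_Suc take_map)
  then show "map (u p) [0..<block_pos p k + q] = phi p (map (u p) [0..<k]) @ replicate q L"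
    using assms(2) len by (simp add: whole phi_letter_eq)
qed

definition pcount :: "nat \<Rightarrow> letter \<Rightarrow> nat \<Rightarrow> int" where
  "pcount p a n = int (occ a (map (u p) [0..<n]))"

definition image_length :: "nat \<Rightarrow> int \<Rightarrow> int \<Rightarrow> int \<Rightarrow> int" where
  "image_length p n s m = (int p + 1) * n - int p * s - m"

lemma length_phi_eq_image_length:
  assumes "p > 0"
  shows "int (length (phi p xs))
    = image_length p (int (length xs)) (int (occ S xs)) (int (occ M xs))"
proof (induction xs)
  case (Cons x xs)
  then show ?case
    using assms by (cases x) (auto simp: image_length_def length_phi_letter algebra_simps)
qed (simp add: image_length_def)

lemma
  assumes "p > 0" "q \<le> Lrun p (u p k)"
  shows pcount_S_block: "pcount p S (block_pos p k + q) = int k - pcount p S k"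
    and pcount_M_block: "pcount p M (block_pos p k + q) = pcount p S k"
  using map_u_block[OF assms] length_eq_occ[of "map (u p) [0..<k]"]
  by (simp_all add: pcount_def occ_phi_S occ_phi_M occ_replicate_L)

lemma block_pos_eq_image_length:
  "p > 0 \<Longrightarrow> int (block_pos p k) = image_length p (int k) (pcount p S k) (pcount p M k)"
  by (simp add: block_pos_def pcount_def length_phi_eq_image_length)

lemma pcount_add: "pcount p a (i + n) = pcount p a i + int (occ a (factor p i n))"
proof -
  have "map (u p) [0..<i + n] = map (u p) [0..<i] @ factor p i n"
    by (simp add: factor_def upt_add_eq_append[of 0 i n])
  then show ?thesis by (simp add: pcount_def)
qed

lemma block_pos_diff_le: "k' \<le> k \<Longrightarrow> block_pos p k' + (k - k') \<le> block_pos p k"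
proof (induction k rule: dec_induct)
  case (step k)
  then show ?case by (simp add: block_pos_Suc Suc_diff_le)
qed simp

lemma block_decomposition:
  "p > 0 \<Longrightarrow> \<exists>k q. q \<le> Lrun p (u p k) \<and> n = block_pos p k + q"
proof (induction n)
  case 0
  then show ?case by (intro exI[of _ 0]) (simp add: block_pos_def)
next
  case (Suc n)
  then obtain k q where kq: "q \<le> Lrun p (u p k)" "n = block_pos p k + q" by blast
  show ?case
  proof (cases "q < Lrun p (u p k)")
    case True
    then show ?thesis using kq by (intro exI[of _ k] exI[of _ "Suc q"]) auto
  next
    case False
    then have "Suc n = block_pos p (Suc k) + 0" using kq by (simp add: block_pos_Suc)
    then show ?thesis by blast
  qed
qed

lemma block_index_le:
  assumes "p > 0" "n = block_pos p k + q"
  shows "k \<le> n" and "0 < n \<Longrightarrow> k < n"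
proof -
  have "k \<le> block_pos p k"
    using block_pos_diff_le[of 0 k p] by simp
  then show "k \<le> n" using assms(2) by simp
  show "k < n" if "0 < n"
  proof (cases k)
    case (Suc k')
    have "block_pos p 1 + k' \<le> block_pos p k"
      using block_pos_diff_le[of 1 k p] Suc by simp
    then show ?thesis
      using assms Suc u_0[OF assms(1)] by (simp add: block_pos_Suc block_pos_def)
  qed (use that in simp)
qed

section \<open>Desubstitution invariants\<close>

text \<open>For factors \<open>v = u[b, a)\<close> and \<open>w = u[e, c)\<close> and a prefix count \<open>f\<close>,
  \<open>cross_diff f a b c e\<close> is the count in \<open>w\<close> minus the count in \<open>v\<close>.\<close>

definition cross_diff :: "(nat \<Rightarrow> int) \<Rightarrow> nat \<Rightarrow> nat \<Rightarrow> nat \<Rightarrow> nat \<Rightarrow> int" where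
  "cross_diff f a b c e = f c - f e - f a + f b"

lemma cross_diff_blocks:
  assumes "p > 0" and offsets: "oa \<le> Lrun p (u p ka)" "ob \<le> Lrun p (u p kb)"
      "oc \<le> Lrun p (u p kc)" "oe \<le> Lrun p (u p ke)"
  defines "a \<equiv> block_pos p ka + oa" and "b \<equiv> block_pos p kb + ob"
    and "c \<equiv> block_pos p kc + oc" and "e \<equiv> block_pos p ke + oe"
  shows "cross_diff int a b c e = image_length p (cross_diff int ka kb kc ke)
      (cross_diff (pcount p S) ka kb kc ke) (cross_diff (pcount p M) ka kb kc ke)
      + int oc + int ob - int oa - int oe"
    and "cross_diff (pcount p S) a b c e
      = cross_diff int ka kb kc ke - cross_diff (pcount p S) ka kb kc ke"
    and "cross_diff (pcount p M) a b c e = cross_diff (pcount p S) ka kb kc ke"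
proof -
  note bp = block_pos_eq_image_length[OF assms(1)]
  note cS = pcount_S_block[OF assms(1)] and cM = pcount_M_block[OF assms(1)]
  show "cross_diff int a b c e = image_length p (cross_diff int ka kb kc ke)
      (cross_diff (pcount p S) ka kb kc ke) (cross_diff (pcount p M) ka kb kc ke)
      + int oc + int ob - int oa - int oe"
    using bp[of ka] bp[of kb] bp[of kc] bp[of ke]
    unfolding a_def b_def c_def e_def cross_diff_def image_length_def
    by (simp add: algebra_simps)
  show "cross_diff (pcount p S) a b c e
      = cross_diff int ka kb kc ke - cross_diff (pcount p S) ka kb kc ke"
    using cS[OF offsets(1)] cS[OF offsets(2)] cS[OF offsets(3)] cS[OF offsets(4)]
    unfolding a_def b_def c_def e_def cross_diff_def by simp
  show "cross_diff (pcount p M) a b c e = cross_diff (pcount p S) ka kb kc ke"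
    using cM[OF offsets(1)] cM[OF offsets(2)] cM[OF offsets(3)] cM[OF offsets(4)]
    unfolding a_def b_def c_def e_def cross_diff_def by simp
qed

lemma shrink_pair: "t \<le> x + y \<Longrightarrow> \<exists>x' \<le> x. \<exists>y' \<le> y. (x - x') + (y - y') = (t::nat)"
  by (intro exI[of _ "x - min x t"] conjI exI[of _ "y - (t - min x t)"]) auto

locale desubstitution_invariant =
  fixes p :: nat and K :: int
    and I :: "int \<Rightarrow> int \<Rightarrow> int \<Rightarrow> letter \<Rightarrow> letter \<Rightarrow> letter \<Rightarrow> letter \<Rightarrow> bool"
  assumes p_pos: "0 < p" and K_nonneg: "0 \<le> K"
    and base: "I 0 0 0 L L L L"
    and step: "\<And>E s m la lb lc le oa ob oc oe. I E s m la lb lc le \<Longrightarrow>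
      oa \<le> Lrun p la \<Longrightarrow> ob \<le> Lrun p lb \<Longrightarrow> oc \<le> Lrun p lc \<Longrightarrow> oe \<le> Lrun p le \<Longrightarrow>
      \<bar>image_length p E s m + int oc + int ob - int oa - int oe\<bar> \<le> K \<Longrightarrow>
      I (image_length p E s m + int oc + int ob - int oa - int oe) (E - s) s
        (block_letter p la oa) (block_letter p lb ob) (block_letter p lc oc) (block_letter p le oe)"
    \<comment> \<open>ancestors at \<open>D = \<plusminus>K\<close> have descendants beyond \<open>\<plusminus>K\<close>, whatever the offsets\<close>
    and top: "\<And>s m la lb lc le. I K s m la lb lc le \<Longrightarrow>
      K + int (Lrun p la) + int (Lrun p le) \<le> image_length p K s m"
    and bottom: "\<And>s m la lb lc le. I (-K) s m la lb lc le \<Longrightarrow>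
      image_length p (-K) s m + int (Lrun p lb) + int (Lrun p lc) \<le> -K"
    and target: "\<And>s m la lb lc le. I 0 s m la lb lc le \<Longrightarrow> \<bar>s + m\<bar> \<le> 3"
begin

abbreviation inv_at :: "nat \<Rightarrow> nat \<Rightarrow> nat \<Rightarrow> nat \<Rightarrow> bool" where
  "inv_at a b c e \<equiv> I (cross_diff int a b c e) (cross_diff (pcount p S) a b c e)
     (cross_diff (pcount p M) a b c e) (u p a) (u p b) (u p c) (u p e)"

lemma inv_at_blocks:
  assumes "inv_at ka kb kc ke"
    and offsets: "oa \<le> Lrun p (u p ka)" "ob \<le> Lrun p (u p kb)"
      "oc \<le> Lrun p (u p kc)" "oe \<le> Lrun p (u p ke)"
    and "\<bar>cross_diff int (block_pos p ka + oa) (block_pos p kb + ob)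
      (block_pos p kc + oc) (block_pos p ke + oe)\<bar> \<le> K"
  shows "inv_at (block_pos p ka + oa) (block_pos p kb + ob) (block_pos p kc + oc) (block_pos p ke + oe)"
  using step[OF assms(1) offsets] assms(6)
  unfolding cross_diff_blocks[OF p_pos offsets] u_block[OF p_pos offsets(1)]
    u_block[OF p_pos offsets(2)] u_block[OF p_pos offsets(3)] u_block[OF p_pos offsets(4)]
  by simp

lemma overshoot_above:
  assumes shrunk: "\<And>kb' kc'. kb' \<le> kb \<Longrightarrow> kc' \<le> kc \<Longrightarrow> cross_diff int ka kb' kc' ke = K \<Longrightarrow>
      inv_at ka kb' kc' ke"
    and over: "K < cross_diff int ka kb kc ke"
    and "oa \<le> Lrun p (u p ka)" "oe \<le> Lrun p (u p ke)"
  shows "K < cross_diff int (block_pos p ka + oa) (block_pos p kb + ob)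
    (block_pos p kc + oc) (block_pos p ke + oe)"
proof -
  obtain kb' kc' where kb': "kb' \<le> kb" and kc': "kc' \<le> kc"
    and "(kc - kc') + (kb - kb') = nat (cross_diff int ka kb kc ke - K)"
    using shrink_pair[of "nat (cross_diff int ka kb kc ke - K)" kc kb] over K_nonneg
    by (force simp: cross_diff_def)
  then have at_K: "cross_diff int ka kb' kc' ke = K"
    using over by (simp add: cross_diff_def of_nat_diff)
  have "K + int (Lrun p (u p ka)) + int (Lrun p (u p ke))
      \<le> cross_diff int (block_pos p ka) (block_pos p kb') (block_pos p kc') (block_pos p ke)"
    using top shrunk[OF kb' kc' at_K] at_K
      cross_diff_blocks(1)[OF p_pos le0 le0 le0 le0, of ka kb' kc' ke] by simp
  moreover have "block_pos p kb' + (kb - kb') \<le> block_pos p kb"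
    "block_pos p kc' + (kc - kc') \<le> block_pos p kc"
    using block_pos_diff_le kb' kc' by auto
  ultimately show ?thesis
    using kb' kc' at_K assms(2-4) unfolding cross_diff_def by linarith
qed

lemma overshoot_below:
  assumes shrunk: "\<And>ka' ke'. ka' \<le> ka \<Longrightarrow> ke' \<le> ke \<Longrightarrow> cross_diff int ka' kb kc ke' = -K \<Longrightarrow>
      inv_at ka' kb kc ke'"
    and over: "cross_diff int ka kb kc ke < -K"
    and "ob \<le> Lrun p (u p kb)" "oc \<le> Lrun p (u p kc)"
  shows "cross_diff int (block_pos p ka + oa) (block_pos p kb + ob)
    (block_pos p kc + oc) (block_pos p ke + oe) < -K"
proof -
  obtain ka' ke' where ka': "ka' \<le> ka" and ke': "ke' \<le> ke"
    and "(ka - ka') + (ke - ke') = nat (- K - cross_diff int ka kb kc ke)"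
    using shrink_pair[of "nat (- K - cross_diff int ka kb kc ke)" ka ke] over K_nonneg
    by (force simp: cross_diff_def)
  then have at_K: "cross_diff int ka' kb kc ke' = -K"
    using over by (simp add: cross_diff_def of_nat_diff)
  have "cross_diff int (block_pos p ka') (block_pos p kb) (block_pos p kc) (block_pos p ke')
      + int (Lrun p (u p kb)) + int (Lrun p (u p kc)) \<le> -K"
    using bottom shrunk[OF ka' ke' at_K] at_K
      cross_diff_blocks(1)[OF p_pos le0 le0 le0 le0, of ka' kb kc ke'] by simp
  moreover have "block_pos p ka' + (ka - ka') \<le> block_pos p ka"
    "block_pos p ke' + (ke - ke') \<le> block_pos p ke"
    using block_pos_diff_le ka' ke' by auto
  ultimately show ?thesis
    using ka' ke' at_K assms(2-4) unfolding cross_diff_def by linarith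
qed

lemma invariant: "\<bar>cross_diff int a b c e\<bar> \<le> K \<Longrightarrow> inv_at a b c e"
proof (induction "a + b + c + e" arbitrary: a b c e rule: less_induct)
  case less
  show ?case
  proof (cases "a + b + c + e = 0")
    case True
    then show ?thesis using base u_0[OF p_pos] by (simp add: cross_diff_def)
  next
    case False
    obtain ka oa kb ob kc oc ke oe where
      offsets: "oa \<le> Lrun p (u p ka)" "ob \<le> Lrun p (u p kb)"
        "oc \<le> Lrun p (u p kc)" "oe \<le> Lrun p (u p ke)"
      and pos: "a = block_pos p ka + oa" "b = block_pos p kb + ob"
        "c = block_pos p kc + oc" "e = block_pos p ke + oe"
      using block_decomposition[OF p_pos] by meson
    have smaller: "ka + kb + kc + ke < a + b + c + e"
      using block_index_le[OF p_pos pos(1)] block_index_le[OF p_pos pos(2)]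
        block_index_le[OF p_pos pos(3)] block_index_le[OF p_pos pos(4)] False by linarith
    have ancestors: "inv_at ka' kb' kc' ke'"
      if "ka' \<le> ka" "kb' \<le> kb" "kc' \<le> kc" "ke' \<le> ke" "\<bar>cross_diff int ka' kb' kc' ke'\<bar> \<le> K"
      for ka' kb' kc' ke'
      using less.hyps[of ka' kb' kc' ke'] smaller that by simp
    consider "\<bar>cross_diff int ka kb kc ke\<bar> \<le> K" | "K < cross_diff int ka kb kc ke"
      | "cross_diff int ka kb kc ke < -K" by linarith
    then show ?thesis
    proof cases
      case 1
      then show ?thesis
        using ancestors[OF order.refl order.refl order.refl order.refl] less.prems
          inv_at_blocks[OF _ offsets] unfolding pos by simp
    next
      case 2
      have "inv_at ka kb' kc' ke" if "kb' \<le> kb" "kc' \<le> kc" "cross_diff int ka kb' kc' ke = K" for kb' kc'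
        using ancestors[of ka kb' kc' ke] that K_nonneg by simp
      then have "K < cross_diff int a b c e"
        using overshoot_above[OF _ 2 offsets(1,4)] unfolding pos by blast
      then show ?thesis using less.prems by linarith
    next
      case 3
      have "inv_at ka' kb kc ke'" if "ka' \<le> ka" "ke' \<le> ke" "cross_diff int ka' kb kc ke' = -K" for ka' ke'
        using ancestors[of ka' kb kc ke'] that K_nonneg by simp
      then have "cross_diff int a b c e < -K"
        using overshoot_below[OF _ 3 offsets(2,3)] unfolding pos by blast
      then show ?thesis using less.prems by linarith
    qed
  qed
qed

theorem balanced: "\<bar>int (occ L (factor p i n)) - int (occ L (factor p j n))\<bar> \<le> 3"
proof -
  have "\<bar>cross_diff (pcount p S) (i + n) i (j + n) j + cross_diff (pcount p M) (i + n) i (j + n) j\<bar> \<le> 3"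
    using target invariant[of "i + n" i "j + n" j] K_nonneg by (simp add: cross_diff_def)
  moreover have len: "int n = int (occ L (factor p k n)) + int (occ S (factor p k n))
      + int (occ M (factor p k n))" for k
    using length_eq_occ[of "factor p k n"] by (simp add: factor_def)
  ultimately show ?thesis
    unfolding cross_diff_def pcount_add using len[of i] len[of j] by linarith
qed

end

fun weight :: "int \<Rightarrow> letter \<Rightarrow> int" where
  "weight wM L = 0" | "weight wM S = 1" | "weight wM M = wM"

text \<open>The invariant bounds \<open>X = D - (p + 1) s - m\<close>, the difference of \<open>|\<cdot>|\<^sub>L - p |\<cdot>|\<^sub>S\<close>
  between the two factors, by a window depending on \<open>(s, m)\<close> and widened by the weights of the
  four boundary letters.\<close>

definition shaped_inv :: "nat \<Rightarrow> int \<Rightarrow> int \<Rightarrow> (int \<Rightarrow> int \<Rightarrow> bool) \<Rightarrow> (int \<Rightarrow> int \<Rightarrow> int)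
    \<Rightarrow> (int \<Rightarrow> int \<Rightarrow> int) \<Rightarrow> int \<Rightarrow> int \<Rightarrow> int \<Rightarrow> letter \<Rightarrow> letter \<Rightarrow> letter \<Rightarrow> letter \<Rightarrow> bool"
  where "shaped_inv p K wM allowed hi lo D s m la lb lc le \<longleftrightarrow> \<bar>D\<bar> \<le> K \<and> allowed s m \<and>
     lo s m - weight wM la - weight wM le \<le> D - (int p + 1) * s - m \<and>
     D - (int p + 1) * s - m \<le> hi s m + weight wM lb + weight wM lc"

section \<open>A closed form for \<open>p \<ge> 5\<close>\<close>

definition large_p_inv :: "nat \<Rightarrow> int \<Rightarrow> int \<Rightarrow> int \<Rightarrow> letter \<Rightarrow> letter \<Rightarrow> letter \<Rightarrow> letter \<Rightarrow> bool"
  where "large_p_inv p = shaped_inv p 5 (1 - int p) (\<lambda>s m. \<bar>m\<bar> \<le> 2) (\<lambda>_ _. 2 * int p) (\<lambda>_ _. - 2 * int p)"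

lemma offset_minus_weight_le:
  "q \<le> Lrun p a \<Longrightarrow> 2 \<le> p \<Longrightarrow> int q - weight (1 - int p) (block_letter p a q) \<le> int p - 1"
  by (cases a) (auto simp: block_letter_def)

lemma weight_le_1: "wM \<le> 1 \<Longrightarrow> weight wM a \<le> 1"
  by (cases a) auto

lemma weight_Lrun_le:
  assumes "1 \<le> p"
  shows "(int p + 1) * weight (1 - int p) a + int (Lrun p a) \<le> int p + 1"
    and "int p * weight (1 - int p) a + (int p + 1) * int (Lrun p a) \<le> int p * (int p + 1)"
proof -
  have "0 \<le> int p * int p" by simp
  then show "(int p + 1) * weight (1 - int p) a + int (Lrun p a) \<le> int p + 1"
    and "int p * weight (1 - int p) a + (int p + 1) * int (Lrun p a) \<le> int p * (int p + 1)"
    using assms by (cases a; simp add: algebra_simps of_nat_diff)+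
qed

lemma large_p_target:
  assumes "2 \<le> p" "large_p_inv p 0 s m la lb lc le"
  shows "\<bar>s + m\<bar> \<le> 3"
proof -
  define Y where "Y = (int p + 1) * s"
  have m: "\<bar>m\<bar> \<le> 2" and lo: "-2 * int p - 2 \<le> - Y - m" and hi: "- Y - m \<le> 2 * int p + 2"
    using assms weight_le_1[of "1 - int p" la] weight_le_1[of "1 - int p" lb]
      weight_le_1[of "1 - int p" lc] weight_le_1[of "1 - int p" le]
    unfolding large_p_inv_def shaped_inv_def Y_def by linarith+
  have "s + m \<le> 3"
  proof (rule ccontr)
    assume "\<not> s + m \<le> 3"
    then have "2 \<le> s" "3 \<le> s \<or> 1 \<le> m" using m by auto
    then have "2 * int p + 2 \<le> Y" "3 \<le> s \<longrightarrow> 3 * int p + 3 \<le> Y"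
      unfolding Y_def using mult_left_mono[of 2 s "int p + 1"] mult_left_mono[of 3 s "int p + 1"]
      by (auto simp: algebra_simps)
    then show False using lo m \<open>3 \<le> s \<or> 1 \<le> m\<close> assms(1) by linarith
  qed
  moreover have "-3 \<le> s + m"
  proof (rule ccontr)
    assume "\<not> -3 \<le> s + m"
    then have "s \<le> -2" "s \<le> -3 \<or> m \<le> -1" using m by auto
    then have "Y \<le> -2 * int p - 2" "s \<le> -3 \<longrightarrow> Y \<le> -3 * int p - 3"
      unfolding Y_def using mult_left_mono[of s "-2" "int p + 1"] mult_left_mono[of s "-3" "int p + 1"]
      by (auto simp: algebra_simps)
    then show False using hi m \<open>s \<le> -3 \<or> m \<le> -1\<close> assms(1) by linarith
  qed
  ultimately show ?thesis by simp
qed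

text \<open>In the image length the cross difference of \<open>S\<close>'s carries the coefficient \<open>p\<^sup>2 + p + 1\<close>,
  which for \<open>p \<ge> 5\<close> outweighs all other contributions unless \<open>|s| \<le> 2\<close>.\<close>

lemma large_p_step_abs_s:
  assumes p: "5 \<le> p" and I: "large_p_inv p E s m la lb lc le"
    and o: "oa \<le> Lrun p la" "ob \<le> Lrun p lb" "oc \<le> Lrun p lc" "oe \<le> Lrun p le"
    and D: "\<bar>image_length p E s m + int oc + int ob - int oa - int oe\<bar> \<le> 5"
  shows "\<bar>s\<bar> \<le> 2"
proof -
  define P where "P = int p"
  define w where "w = weight (1 - P)"
  define X where "X = E - (P + 1) * s - m"
  define Dn where "Dn = image_length p E s m + int oc + int ob - int oa - int oe"
  have P5: "5 \<le> P" using p by (simp add: P_def)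
  have Im: "\<bar>m\<bar> \<le> 2" and Xlo: "-2 * P - w la - w le \<le> X" and Xhi: "X \<le> 2 * P + w lb + w lc"
    using I by (auto simp: large_p_inv_def shaped_inv_def X_def P_def w_def)
  have Dfull: "Dn = (P * P + P + 1) * s + P * m + (P + 1) * X + int oc + int ob - int oa - int oe"
    unfolding Dn_def X_def P_def image_length_def by (simp add: algebra_simps)
  have Dabs: "\<bar>Dn\<bar> \<le> 5" using D by (simp add: Dn_def)
  have PP: "5 * P \<le> P * P" using P5 by (intro mult_right_mono) auto
  have wr: "(P + 1) * w l + int (Lrun p l) \<le> P + 1" for l
    using weight_Lrun_le(1)[of p l] p by (simp add: P_def w_def)
  have oi: "int oa \<le> int (Lrun p la)" "int ob \<le> int (Lrun p lb)"
    "int oc \<le> int (Lrun p lc)" "int oe \<le> int (Lrun p le)" using o by auto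
  have PP0: "0 \<le> P * P" by simp
  have "s \<le> 2"
  proof (rule ccontr)
    assume "\<not> s \<le> 2"
    then have "(P * P + P + 1) * 3 \<le> (P * P + P + 1) * s" using PP0 P5 by (intro mult_left_mono) auto
    then have h1: "3 * (P * P) + 3 * P + 3 \<le> (P * P + P + 1) * s" by (simp add: algebra_simps)
    have "(P + 1) * (-2 * P - w la - w le) \<le> (P + 1) * X" using Xlo P5 by (intro mult_left_mono) auto
    then have h2: "-2 * (P * P) - 2 * P - (P + 1) * w la - (P + 1) * w le \<le> (P + 1) * X"
      by (simp add: algebra_simps)
    have "P * (-2) \<le> P * m" using Im P5 by (intro mult_left_mono) auto
    then have "6 \<le> Dn" using Dfull h1 h2 wr[of la] wr[of le] PP oi P5 by linarith
    then show False using Dabs by simp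
  qed
  moreover have "-2 \<le> s"
  proof (rule ccontr)
    assume "\<not> -2 \<le> s"
    then have "(P * P + P + 1) * s \<le> (P * P + P + 1) * (-3)" using PP0 P5 by (intro mult_left_mono) auto
    then have h1: "(P * P + P + 1) * s \<le> -3 * (P * P) - 3 * P - 3" by (simp add: algebra_simps)
    have "(P + 1) * X \<le> (P + 1) * (2 * P + w lb + w lc)" using Xhi P5 by (intro mult_left_mono) auto
    then have h2: "(P + 1) * X \<le> 2 * (P * P) + 2 * P + (P + 1) * w lb + (P + 1) * w lc"
      by (simp add: algebra_simps)
    have "P * m \<le> P * 2" using Im P5 by (intro mult_left_mono) auto
    then have "Dn \<le> -6" using Dfull h1 h2 wr[of lb] wr[of lc] PP oi P5 by linarith
    then show False using Dabs by simp
  qed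
  ultimately show ?thesis by simp
qed

lemma large_p_step:
  assumes p: "5 \<le> p" and I: "large_p_inv p E s m la lb lc le"
    and o: "oa \<le> Lrun p la" "ob \<le> Lrun p lb" "oc \<le> Lrun p lc" "oe \<le> Lrun p le"
    and D: "\<bar>image_length p E s m + int oc + int ob - int oa - int oe\<bar> \<le> 5"
  shows "large_p_inv p (image_length p E s m + int oc + int ob - int oa - int oe) (E - s) s
    (block_letter p la oa) (block_letter p lb ob) (block_letter p lc oc) (block_letter p le oe)"
proof -
  define P where "P = int p"
  define w where "w = weight (1 - P)"
  define Dn where "Dn = image_length p E s m + int oc + int ob - int oa - int oe"
  have Im: "\<bar>m\<bar> \<le> 2" using I by (simp add: large_p_inv_def shaped_inv_def)
  have Xn: "Dn - (P + 1) * (E - s) - s = int oc + int ob - int oa - int oe - m"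
    unfolding Dn_def P_def image_length_def by (simp add: algebra_simps)
  have "int q - w (block_letter p l q) \<le> P - 1" if "q \<le> Lrun p l" for q l
    using offset_minus_weight_le[OF that] p by (simp add: P_def w_def)
  from this[OF o(1)] this[OF o(2)] this[OF o(3)] this[OF o(4)] show ?thesis
    unfolding large_p_inv_def shaped_inv_def Dn_def[symmetric] P_def[symmetric] w_def[symmetric]
    using D large_p_step_abs_s[OF assms] Xn Im by (auto simp: Dn_def)
qed

lemma large_p_top:
  assumes p: "5 \<le> p" and I: "large_p_inv p 5 s m la lb lc le"
  shows "5 + int (Lrun p la) + int (Lrun p le) \<le> image_length p 5 s m"
proof -
  define P where "P = int p"
  define w where "w = weight (1 - P)"
  define X where "X = 5 - (P + 1) * s - m"
  define G where "G = 5 * P - P * s - m - int (Lrun p la) - int (Lrun p le)"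
  have P5: "5 \<le> P" using p by (simp add: P_def)
  have Im: "\<bar>m\<bar> \<le> 2" and Xlo: "-2 * P - w la - w le \<le> X"
    using I by (auto simp: large_p_inv_def shaped_inv_def X_def P_def w_def)
  have "(P + 1) * G = 5 * (P * P) + P * X - m - (P + 1) * int (Lrun p la) - (P + 1) * int (Lrun p le)"
    unfolding G_def X_def by (simp add: algebra_simps)
  moreover have "P * (-2 * P - w la - w le) \<le> P * X" using Xlo P5 by (intro mult_left_mono) auto
  then have "-2 * (P * P) - P * w la - P * w le \<le> P * X" by (simp add: algebra_simps)
  moreover have w2: "P * w l + (P + 1) * int (Lrun p l) \<le> P * P + P" for l
    using weight_Lrun_le(2)[of p l] p by (simp add: P_def w_def algebra_simps)
  moreover have "5 * P \<le> P * P" using P5 by (intro mult_right_mono) auto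
  ultimately have "0 < (P + 1) * G" using Im P5 w2[of la] w2[of le] by linarith
  then have "0 < G" using P5 by (simp add: zero_less_mult_iff)
  then show ?thesis unfolding G_def P_def image_length_def by (simp add: algebra_simps)
qed

lemma large_p_bottom:
  assumes p: "5 \<le> p" and I: "large_p_inv p (-5) s m la lb lc le"
  shows "image_length p (-5) s m + int (Lrun p lb) + int (Lrun p lc) \<le> -5"
proof -
  define P where "P = int p"
  define w where "w = weight (1 - P)"
  define X where "X = -5 - (P + 1) * s - m"
  define G where "G = -5 * P - P * s - m + int (Lrun p lb) + int (Lrun p lc)"
  have P5: "5 \<le> P" using p by (simp add: P_def)
  have Im: "\<bar>m\<bar> \<le> 2" and Xhi: "X \<le> 2 * P + w lb + w lc"
    using I by (auto simp: large_p_inv_def shaped_inv_def X_def P_def w_def)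
  have "(P + 1) * G = -5 * (P * P) + P * X - m + (P + 1) * int (Lrun p lb) + (P + 1) * int (Lrun p lc)"
    unfolding G_def X_def by (simp add: algebra_simps)
  moreover have "P * X \<le> P * (2 * P + w lb + w lc)" using Xhi P5 by (intro mult_left_mono) auto
  then have "P * X \<le> 2 * (P * P) + P * w lb + P * w lc" by (simp add: algebra_simps)
  moreover have w2: "P * w l + (P + 1) * int (Lrun p l) \<le> P * P + P" for l
    using weight_Lrun_le(2)[of p l] p by (simp add: P_def w_def algebra_simps)
  moreover have "5 * P \<le> P * P" using P5 by (intro mult_right_mono) auto
  ultimately have "(P + 1) * G < 0" using Im P5 w2[of lb] w2[of lc] by linarith
  then have "G < 0" using P5 by (simp add: mult_less_0_iff)
  then show ?thesis unfolding G_def P_def image_length_def by (simp add: algebra_simps)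
qed

lemma large_p_desubstitution_invariant:
  assumes "5 \<le> p"
  shows "desubstitution_invariant p 5 (large_p_inv p)"
proof
  show "large_p_inv p 0 0 0 L L L L" by (simp add: large_p_inv_def shaped_inv_def)
  show "\<bar>s + m\<bar> \<le> 3" if "large_p_inv p 0 s m la lb lc le" for s m la lb lc le
    using large_p_target[OF _ that] assms by simp
qed (use assms in \<open>auto intro: large_p_step large_p_top large_p_bottom\<close>)

section \<open>Certified invariants\<close>

text \<open>The checks below range over pairs \<open>(weight sum, offset sum)\<close> of the two boundary letters
  entering each bound rather than over the letters themselves; \<open>covers_pairs\<close> makes this
  abstraction sound and keeps evaluation small.\<close>

definition letters :: "letter list" where
  "letters = [L, S, M]"

lemma in_letters: "a \<in> set letters"
  by (cases a) (auto simp: letters_def)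

definition offset_gain :: "nat \<Rightarrow> int \<Rightarrow> letter \<Rightarrow> nat \<Rightarrow> int" where
  "offset_gain p wM a q = int q - weight wM (block_letter p a q)"

definition pair_offsets :: "nat \<Rightarrow> int \<Rightarrow> (int \<times> int \<times> int) list" where
  "pair_offsets p wM = [(weight wM a + weight wM b, int qa + int qb,
      offset_gain p wM a qa + offset_gain p wM b qb).
    a \<leftarrow> letters, b \<leftarrow> letters, qa \<leftarrow> [0..<Suc (Lrun p a)], qb \<leftarrow> [0..<Suc (Lrun p b)]]"

definition pair_runs :: "nat \<Rightarrow> int \<Rightarrow> (int \<times> int) list" where
  "pair_runs p wM = [(weight wM a + weight wM b, int (Lrun p a) + int (Lrun p b)).
    a \<leftarrow> letters, b \<leftarrow> letters]"

lemma concat_map_memI: "y \<in> set (f x) \<Longrightarrow> x \<in> set xs \<Longrightarrow> y \<in> set (concat (map f xs))"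
  by auto

lemma pair_offsets_mem:
  assumes "qa \<le> Lrun p a" "qb \<le> Lrun p b"
  shows "(weight wM a + weight wM b, int qa + int qb,
    offset_gain p wM a qa + offset_gain p wM b qb) \<in> set (pair_offsets p wM)"
proof -
  have qa: "qa \<in> set [0..<Suc (Lrun p a)]" and qb: "qb \<in> set [0..<Suc (Lrun p b)]"
    using assms by auto
  show ?thesis
    unfolding pair_offsets_def
    by (rule concat_map_memI[OF _ in_letters[of a]], rule concat_map_memI[OF _ in_letters[of b]],
        rule concat_map_memI[OF _ qa], simp only: set_map, rule imageI[OF qb])
qed

lemma pair_runs_mem: "(weight wM a + weight wM b, int (Lrun p a) + int (Lrun p b)) \<in> set (pair_runs p wM)"
  using in_letters[of a] in_letters[of b] unfolding pair_runs_def by auto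

definition covers_pairs :: "nat \<Rightarrow> int \<Rightarrow> (int \<times> int \<times> int) list \<Rightarrow> (int \<times> int) list \<Rightarrow> bool"
  where "covers_pairs p wM pairsU pairsP \<longleftrightarrow>
    (\<forall>(w1, o1, g1) \<in> set (pair_offsets p wM). \<exists>(w2, o2, g2) \<in> set pairsU. w2 = w1 \<and> o2 = o1 \<and> g1 \<le> g2) \<and>
    (\<forall>(w1, r1) \<in> set (pair_runs p wM). \<exists>(w2, r2) \<in> set pairsP. w1 \<le> w2 \<and> r1 \<le> r2)"

definition cert_allowed :: "nat \<Rightarrow> int \<Rightarrow> (int \<Rightarrow> int \<Rightarrow> bool) \<Rightarrow> (int \<times> int) list
    \<Rightarrow> (int \<Rightarrow> int \<Rightarrow> int) \<Rightarrow> (int \<Rightarrow> int \<Rightarrow> int) \<Rightarrow> (int \<times> int) list \<Rightarrow> bool"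
  where "cert_allowed p K allowed cands hi lo pairsP \<longleftrightarrow>
    (\<forall>(s, m) \<in> set cands. \<forall>E \<in> set [-K..K]. \<forall>(w1, r1) \<in> set pairsP. \<forall>(w2, r2) \<in> set pairsP.
      (let X = E - (int p + 1) * s - m; G = image_length p E s m in
       X \<le> hi s m + w1 \<and> lo s m - w2 \<le> X \<and> -K \<le> G + r1 \<and> G - r2 \<le> K \<longrightarrow> allowed (E - s) s))"

definition cert_upper :: "nat \<Rightarrow> int \<Rightarrow> (int \<Rightarrow> int \<Rightarrow> bool) \<Rightarrow> (int \<times> int) list
    \<Rightarrow> (int \<Rightarrow> int \<Rightarrow> int) \<Rightarrow> (int \<Rightarrow> int \<Rightarrow> int) \<Rightarrow> (int \<times> int \<times> int) list \<Rightarrow> bool"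
  where "cert_upper p K allowed cands hi lo pairsU \<longleftrightarrow>
    (\<forall>(s, m) \<in> set cands. \<forall>E \<in> set [-K..K]. allowed (E - s) s \<longrightarrow> (\<forall>(w1, o1, g1) \<in> set pairsU.
      (let X = E - (int p + 1) * s - m; G = image_length p E s m in
       X \<le> hi s m + w1 \<and> lo s m - 2 \<le> X \<and> -K \<le> G + o1
       \<longrightarrow> g1 - max 0 (G + o1 - K) - m \<le> hi (E - s) s)))"

definition cert_lower :: "nat \<Rightarrow> int \<Rightarrow> (int \<Rightarrow> int \<Rightarrow> bool) \<Rightarrow> (int \<times> int) list
    \<Rightarrow> (int \<Rightarrow> int \<Rightarrow> int) \<Rightarrow> (int \<Rightarrow> int \<Rightarrow> int) \<Rightarrow> (int \<times> int \<times> int) list \<Rightarrow> bool"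
  where "cert_lower p K allowed cands hi lo pairsU \<longleftrightarrow>
    (\<forall>(s, m) \<in> set cands. \<forall>E \<in> set [-K..K]. allowed (E - s) s \<longrightarrow> (\<forall>(w1, o1, g1) \<in> set pairsU.
      (let X = E - (int p + 1) * s - m; G = image_length p E s m in
       lo s m - w1 \<le> X \<and> X \<le> hi s m + 2 \<and> G - o1 \<le> K
       \<longrightarrow> lo (E - s) s \<le> - g1 + max 0 (-K - (G - o1)) - m)))"

definition cert_overshoot :: "nat \<Rightarrow> int \<Rightarrow> (int \<times> int) list \<Rightarrow> (int \<Rightarrow> int \<Rightarrow> int)
    \<Rightarrow> (int \<Rightarrow> int \<Rightarrow> int) \<Rightarrow> (int \<times> int) list \<Rightarrow> bool"
  where "cert_overshoot p K cands hi lo pairsP \<longleftrightarrow>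
    (\<forall>(s, m) \<in> set cands. \<forall>(w1, r1) \<in> set pairsP.
      (let X = K - (int p + 1) * s - m in
       lo s m - w1 \<le> X \<and> X \<le> hi s m + 2 \<longrightarrow> K + r1 \<le> image_length p K s m) \<and>
      (let X = -K - (int p + 1) * s - m in
       lo s m - 2 \<le> X \<and> X \<le> hi s m + w1 \<longrightarrow> image_length p (-K) s m + r1 \<le> -K))"

definition cert_target :: "nat \<Rightarrow> (int \<times> int) list \<Rightarrow> (int \<Rightarrow> int \<Rightarrow> int) \<Rightarrow> (int \<Rightarrow> int \<Rightarrow> int) \<Rightarrow> bool"
  where "cert_target p cands hi lo \<longleftrightarrow>
    (\<forall>(s, m) \<in> set cands. let X = - ((int p + 1) * s) - m in
      lo s m - 2 \<le> X \<and> X \<le> hi s m + 2 \<longrightarrow> \<bar>s + m\<bar> \<le> 3)"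

locale certified_invariant =
  fixes p :: nat and K wM :: int and allowed :: "int \<Rightarrow> int \<Rightarrow> bool"
    and cands :: "(int \<times> int) list" and hi lo :: "int \<Rightarrow> int \<Rightarrow> int"
    and pairsU :: "(int \<times> int \<times> int) list" and pairsP :: "(int \<times> int) list"
  assumes p_gt_0: "0 < p" and K_ge_0: "0 \<le> K" and wM_le_1: "wM \<le> 1"
    and allowed_cands: "\<And>s m. allowed s m \<Longrightarrow> (s, m) \<in> set cands"
    and zero_allowed: "allowed 0 0" and zero_bounds: "lo 0 0 \<le> 0" "0 \<le> hi 0 0"
    and covers: "covers_pairs p wM pairsU pairsP"
    and allowed_ok: "cert_allowed p K allowed cands hi lo pairsP"
    and upper_ok: "cert_upper p K allowed cands hi lo pairsU"
    and lower_ok: "cert_lower p K allowed cands hi lo pairsU"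
    and overshoot_ok: "cert_overshoot p K cands hi lo pairsP"
    and target_ok: "cert_target p cands hi lo"
begin

abbreviation w :: "letter \<Rightarrow> int" where
  "w \<equiv> weight wM"

lemma w_le_1: "w a \<le> 1"
  using weight_le_1[OF wM_le_1] .

lemma pair_offsets_bound:
  assumes "qa \<le> Lrun p a" "qb \<le> Lrun p b"
  obtains g where "(w a + w b, int qa + int qb, g) \<in> set pairsU"
    "offset_gain p wM a qa + offset_gain p wM b qb \<le> g"
  using covers pair_offsets_mem[OF assms, of wM] unfolding covers_pairs_def by fastforce

lemma pair_runs_bound:
  obtains w1 r1 where "(w1, r1) \<in> set pairsP" "w a + w b \<le> w1" "int (Lrun p a) + int (Lrun p b) \<le> r1"
  using covers pair_runs_mem[of wM a b p] unfolding covers_pairs_def by fastforce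

lemma shaped_step:
  assumes I: "shaped_inv p K wM allowed hi lo E s m la lb lc le"
    and o: "oa \<le> Lrun p la" "ob \<le> Lrun p lb" "oc \<le> Lrun p lc" "oe \<le> Lrun p le"
    and D: "\<bar>image_length p E s m + int oc + int ob - int oa - int oe\<bar> \<le> K"
  shows "shaped_inv p K wM allowed hi lo (image_length p E s m + int oc + int ob - int oa - int oe)
    (E - s) s (block_letter p la oa) (block_letter p lb ob) (block_letter p lc oc) (block_letter p le oe)"
proof -
  define X where "X = E - (int p + 1) * s - m"
  define G where "G = image_length p E s m"
  define Dn where "Dn = G + int oc + int ob - int oa - int oe"
  have Dabs: "\<bar>Dn\<bar> \<le> K" using D by (simp add: Dn_def G_def)
  have allowed: "allowed s m" and IE: "\<bar>E\<bar> \<le> K" and Xlo: "lo s m - w la - w le \<le> X"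
    and Xhi: "X \<le> hi s m + w lb + w lc"
    using I by (auto simp: shaped_inv_def X_def)
  have cand: "(s, m) \<in> set cands" by (rule allowed_cands[OF allowed])
  have E: "E \<in> set [-K..K]" using IE by auto
  obtain w1 r1 where P1: "(w1, r1) \<in> set pairsP" "w lb + w lc \<le> w1" "int (Lrun p lb) + int (Lrun p lc) \<le> r1"
    by (rule pair_runs_bound)
  obtain w2 r2 where P2: "(w2, r2) \<in> set pairsP" "w la + w le \<le> w2" "int (Lrun p la) + int (Lrun p le) \<le> r2"
    by (rule pair_runs_bound)
  have "X \<le> hi s m + w1 \<and> lo s m - w2 \<le> X \<and> -K \<le> G + r1 \<and> G - r2 \<le> K"
    using Xhi Xlo P1 P2 Dabs o unfolding Dn_def by auto
  then have allowed': "allowed (E - s) s"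
    using allowed_ok cand E P1(1) P2(1) unfolding cert_allowed_def X_def G_def Let_def by fastforce
  obtain g1 where U: "(w lb + w lc, int ob + int oc, g1) \<in> set pairsU"
      "offset_gain p wM lb ob + offset_gain p wM lc oc \<le> g1"
    using pair_offsets_bound[OF o(2,3)] by blast
  have "X \<le> hi s m + (w lb + w lc) \<and> lo s m - 2 \<le> X \<and> -K \<le> G + (int ob + int oc)"
    using Xhi Xlo w_le_1[of la] w_le_1[of le] Dabs o unfolding Dn_def by auto
  then have upper: "g1 - max 0 (G + (int ob + int oc) - K) - m \<le> hi (E - s) s"
    using upper_ok cand E allowed' U(1) unfolding cert_upper_def X_def G_def Let_def by fastforce
  obtain g2 where L: "(w la + w le, int oa + int oe, g2) \<in> set pairsU"
      "offset_gain p wM la oa + offset_gain p wM le oe \<le> g2"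
    using pair_offsets_bound[OF o(1,4)] by blast
  have "lo s m - (w la + w le) \<le> X \<and> X \<le> hi s m + 2 \<and> G - (int oa + int oe) \<le> K"
    using Xhi Xlo w_le_1[of lb] w_le_1[of lc] Dabs o unfolding Dn_def by auto
  then have lower: "lo (E - s) s \<le> - g2 + max 0 (-K - (G - (int oa + int oe))) - m"
    using lower_ok cand E allowed' L(1) unfolding cert_lower_def X_def G_def Let_def by fastforce
  have Xn: "Dn - (int p + 1) * (E - s) - s = int oc + int ob - int oa - int oe - m"
    unfolding Dn_def G_def image_length_def by (simp add: algebra_simps)
  have "max 0 (G + (int ob + int oc) - K) \<le> int oa + int oe"
    "max 0 (-K - (G - (int oa + int oe))) \<le> int ob + int oc"
    using Dabs unfolding Dn_def by auto
  then show ?thesis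
    using Dabs allowed' Xn upper U(2) lower L(2)
    unfolding shaped_inv_def Dn_def G_def offset_gain_def by auto
qed

lemma shaped_top:
  assumes "shaped_inv p K wM allowed hi lo K s m la lb lc le"
  shows "K + int (Lrun p la) + int (Lrun p le) \<le> image_length p K s m"
proof -
  have allowed: "allowed s m" and Xlo: "lo s m - w la - w le \<le> K - (int p + 1) * s - m"
    and Xhi: "K - (int p + 1) * s - m \<le> hi s m + w lb + w lc"
    using assms by (auto simp: shaped_inv_def)
  obtain w1 r1 where P: "(w1, r1) \<in> set pairsP" "w la + w le \<le> w1"
    "int (Lrun p la) + int (Lrun p le) \<le> r1"
    by (rule pair_runs_bound)
  have "lo s m - w1 \<le> K - (int p + 1) * s - m \<and> K - (int p + 1) * s - m \<le> hi s m + 2"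
    using Xlo Xhi P w_le_1[of lb] w_le_1[of lc] by auto
  then have "K + r1 \<le> image_length p K s m"
    using overshoot_ok allowed_cands[OF allowed] P(1) unfolding cert_overshoot_def Let_def by fastforce
  then show ?thesis using P by linarith
qed

lemma shaped_bottom:
  assumes "shaped_inv p K wM allowed hi lo (-K) s m la lb lc le"
  shows "image_length p (-K) s m + int (Lrun p lb) + int (Lrun p lc) \<le> -K"
proof -
  have allowed: "allowed s m" and Xlo: "lo s m - w la - w le \<le> -K - (int p + 1) * s - m"
    and Xhi: "-K - (int p + 1) * s - m \<le> hi s m + w lb + w lc"
    using assms by (auto simp: shaped_inv_def)
  obtain w1 r1 where P: "(w1, r1) \<in> set pairsP" "w lb + w lc \<le> w1"
    "int (Lrun p lb) + int (Lrun p lc) \<le> r1"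
    by (rule pair_runs_bound)
  have "lo s m - 2 \<le> -K - (int p + 1) * s - m \<and> -K - (int p + 1) * s - m \<le> hi s m + w1"
    using Xlo Xhi P w_le_1[of la] w_le_1[of le] by auto
  then have "image_length p (-K) s m + r1 \<le> -K"
    using overshoot_ok allowed_cands[OF allowed] P(1) unfolding cert_overshoot_def Let_def by fastforce
  then show ?thesis using P by linarith
qed

lemma shaped_target:
  assumes "shaped_inv p K wM allowed hi lo 0 s m la lb lc le"
  shows "\<bar>s + m\<bar> \<le> 3"
proof -
  have allowed: "allowed s m" and "lo s m - w la - w le \<le> 0 - (int p + 1) * s - m"
    and "0 - (int p + 1) * s - m \<le> hi s m + w lb + w lc"
    using assms by (auto simp: shaped_inv_def)
  then have "lo s m - 2 \<le> - ((int p + 1) * s) - m \<and> - ((int p + 1) * s) - m \<le> hi s m + 2"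
    using w_le_1[of la] w_le_1[of le] w_le_1[of lb] w_le_1[of lc] by simp
  then show ?thesis
    using target_ok allowed_cands[OF allowed] unfolding cert_target_def Let_def by fastforce
qed

sublocale desubstitution_invariant p K "shaped_inv p K wM allowed hi lo"
proof
  show "shaped_inv p K wM allowed hi lo 0 0 0 L L L L"
    using K_ge_0 zero_allowed zero_bounds by (simp add: shaped_inv_def)
qed (use p_gt_0 K_ge_0 in \<open>auto intro: shaped_step shaped_top shaped_bottom shaped_target\<close>)

end

section \<open>The cases \<open>p = 2, 3, 4\<close>\<close>

definition allowed4 :: "int \<Rightarrow> int \<Rightarrow> bool" where
  "allowed4 s m \<longleftrightarrow> \<bar>s\<bar> \<le> 3 \<and> \<bar>m\<bar> \<le> 3"

definition cands4 :: "(int \<times> int) list" where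
  "cands4 = List.product [-3..3] [-3..3]"

definition hi4 :: "int \<Rightarrow> int \<Rightarrow> int" where
  "hi4 s m = (if -1 \<le> m then 9 else if m = -2 then 8 else 5)"

definition lo4 :: "int \<Rightarrow> int \<Rightarrow> int" where
  "lo4 s m = (if m \<le> 1 then -9 else if m = 2 then -8 else -5)"

definition pairsU4 :: "(int \<times> int \<times> int) list" where
  "pairsU4 = [(-6, 0, 0), (-6, 1, 1), (-6, 2, 2), (-6, 3, 3), (-6, 4, 4), (-6, 5, 4), (-6, 6, 4), (-3, 0, 0), (-3, 1, 1), (-3, 2, 2), (-3, 3, 3), (-3, 4, 4), (-3, 5, 5), (-3, 6, 5), (-3, 7, 5), (-2, 0, 3), (-2, 1, 4), (-2, 2, 5), (-2, 3, 5), (0, 0, 0), (0, 1, 1), (0, 2, 2), (0, 3, 3), (0, 4, 4), (0, 5, 5), (0, 6, 6), (0, 7, 6), (0, 8, 6), (1, 0, 3), (1, 1, 4), (1, 2, 5), (1, 3, 6), (1, 4, 6), (2, 0, 6)]"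

definition pairsP4 :: "(int \<times> int) list" where "pairsP4 = [(0, 8), (1, 4), (2, 0)]"

interpretation balanced4: certified_invariant 4 5 "-3" allowed4 cands4 hi4 lo4 pairsU4 pairsP4
proof unfold_locales
  show "allowed4 s m \<Longrightarrow> (s, m) \<in> set cands4" for s m
    unfolding cands4_def set_product set_upto by (auto simp: allowed4_def)
qed code_simp+

definition allowed3 :: "int \<Rightarrow> int \<Rightarrow> bool" where
  "allowed3 s m \<longleftrightarrow> \<bar>s\<bar> \<le> 4 \<and> \<bar>m\<bar> \<le> 3"

definition cands3 :: "(int \<times> int) list" where
  "cands3 = List.product [-4..4] [-3..3]"

definition hi3 :: "int \<Rightarrow> int \<Rightarrow> int" where
  "hi3 s m = (if -1 \<le> m then 7 else if m = -2 then 6 else 4)"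

definition lo3 :: "int \<Rightarrow> int \<Rightarrow> int" where
  "lo3 s m = (if m \<le> 1 then -7 else if m = 2 then -6 else -4)"

definition pairsU3 :: "(int \<times> int \<times> int) list" where
  "pairsU3 = [(-4, 0, 0), (-4, 1, 1), (-4, 2, 2), (-4, 3, 2), (-4, 4, 2), (-2, 0, 0), (-2, 1, 1), (-2, 2, 2), (-2, 3, 3), (-2, 4, 3), (-2, 5, 3), (-1, 0, 2), (-1, 1, 3), (-1, 2, 3), (0, 0, 0), (0, 1, 1), (0, 2, 2), (0, 3, 3), (0, 4, 4), (0, 5, 4), (0, 6, 4), (1, 0, 2), (1, 1, 3), (1, 2, 4), (1, 3, 4), (2, 0, 4)]"

definition pairsP3 :: "(int \<times> int) list" where "pairsP3 = [(0, 6), (1, 3), (2, 0)]"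

interpretation balanced3: certified_invariant 3 5 "-2" allowed3 cands3 hi3 lo3 pairsU3 pairsP3
proof unfold_locales
  show "allowed3 s m \<Longrightarrow> (s, m) \<in> set cands3" for s m
    unfolding cands3_def set_product set_upto by (auto simp: allowed3_def)
qed code_simp+

text \<open>Row \<open>s + 5\<close>, column \<open>m + 4\<close> holds \<open>Some (hi, lo)\<close> for each admissible \<open>(s, m)\<close>.\<close>

definition table2 :: "(int \<times> int) option list list" where
  "table2 = [[None, None, None, None, None, Some (6, 8), Some (6, 7), None, None],
   [None, None, None, Some (5, 7), Some (6, 6), Some (6, 5), Some (6, 4), Some (5, 3), None],
   [None, None, Some (4, 5), Some (5, 4), Some (5, 3), Some (6, 2), Some (6, 1), Some (5, 1), None],
   [Some (2, 4), Some (3, 3), Some (3, 2), Some (4, 1), Some (5, 0), Some (5, -1), Some (6, -1), Some (5, 0), Some (5, 2)],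
   [Some (1, 1), Some (2, 0), Some (3, -1), Some (4, -2), Some (4, -3), Some (5, -3), Some (5, -2), Some (5, -1), Some (5, 1)],
   [Some (0, -2), Some (1, -3), Some (2, -4), Some (3, -5), Some (4, -4), Some (5, -3), Some (4, -2), Some (3, -1), Some (2, 0)],
   [Some (-1, -5), Some (1, -5), Some (2, -5), Some (3, -5), Some (3, -4), Some (2, -4), Some (1, -3), Some (0, -2), Some (-1, -1)],
   [Some (-2, -5), Some (0, -5), Some (1, -6), Some (1, -5), Some (0, -5), Some (-1, -4), Some (-2, -3), Some (-3, -3), Some (-4, -2)],
   [None, Some (-1, -5), Some (-1, -6), Some (-2, -6), Some (-3, -5), Some (-4, -5), Some (-5, -4), None, None],
   [None, Some (-3, -5), Some (-4, -6), Some (-5, -6), Some (-6, -6), Some (-7, -5), None, None, None],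
   [None, None, Some (-7, -6), Some (-8, -6), None, None, None, None, None]]"

definition bounds2 :: "int \<Rightarrow> int \<Rightarrow> (int \<times> int) option" where
  "bounds2 s m = (if -5 \<le> s \<and> s \<le> 5 \<and> -4 \<le> m \<and> m \<le> 4 then table2 ! nat (s + 5) ! nat (m + 4) else None)"

definition allowed2 :: "int \<Rightarrow> int \<Rightarrow> bool" where
  "allowed2 s m \<longleftrightarrow> bounds2 s m \<noteq> None"

definition hi2 :: "int \<Rightarrow> int \<Rightarrow> int" where
  "hi2 s m = (case bounds2 s m of Some (h, l) \<Rightarrow> h | None \<Rightarrow> 0)"

definition lo2 :: "int \<Rightarrow> int \<Rightarrow> int" where
  "lo2 s m = (case bounds2 s m of Some (h, l) \<Rightarrow> l | None \<Rightarrow> 0)"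

definition cands2 :: "(int \<times> int) list" where
  "cands2 = filter (\<lambda>(s, m). allowed2 s m) (List.product [-5..5] [-4..4])"

definition pairsU2 :: "(int \<times> int \<times> int) list" where
  "pairsU2 = [(0, 0, 0), (0, 1, 1), (0, 2, 2), (0, 3, 2), (0, 4, 2), (1, 0, 0), (1, 1, 1), (1, 2, 1), (2, 0, 0)]"

definition pairsP2 :: "(int \<times> int) list" where "pairsP2 = [(0, 4), (1, 2), (2, 0)]"

interpretation balanced2: certified_invariant 2 6 0 allowed2 cands2 hi2 lo2 pairsU2 pairsP2
proof unfold_locales
  show "allowed2 s m \<Longrightarrow> (s, m) \<in> set cands2" for s m
    unfolding cands2_def set_filter set_product set_upto
    by (cases "-5 \<le> s \<and> s \<le> 5 \<and> -4 \<le> m \<and> m \<le> 4") (auto simp: allowed2_def bounds2_def)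
qed code_simp+

theorem theorem6p1:
  fixes p i j n :: nat
  assumes "p > 1"
  shows "\<bar>int (occ L (factor p i n)) - int (occ L (factor p j n))\<bar> \<le> 3"
proof -
  consider "p = 2" | "p = 3" | "p = 4" | "5 \<le> p" using assms by linarith
  then show ?thesis
  proof cases
    case 4
    then interpret desubstitution_invariant p 5 "large_p_inv p"
      by (rule large_p_desubstitution_invariant)
    show ?thesis by (rule balanced)
  qed (simp_all add: balanced2.balanced balanced3.balanced balanced4.balanced)
qed

end
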